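(* Consider the general Hubbard model of the context, let $N_{\rm e}\le N_{\rm d}$, let $A\subset V$ with $|A|=N_{\rm e}$, decompose $A$ into its connected components $C_1,\dots,C_n$ (with respect to the connectivity defined in the context), and let $m_k\in\{-|C_k|/2,\,1-|C_k|/2,\dots,|C_k|/2\}$ for $k=1,\dots,n$. Then the state $$\Phi_{A,\{m_k\}}=\Big\{\prod_{k=1}^n(\hat S^-_k)^{|C_k|/2-m_k}\Big\}\prod_{u\in A}a^\dagger_{u\uparrow}\Phi_0$$ satisfies $H\Phi_{A,\{m_k\}}=N_{\rm e}\varepsilon_0\Phi_{A,\{m_k\}}$, and $N_{\rm e}\varepsilon_0$ is the ground state energy of $H$ in the subspace with electron number $N_{\rm e}$; in particular $\Phi_{A,\{m_k\}}$ is a ground state in that subspace.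
   Context: Let $\Lambda$ be a finite set, with fermion operators $c_{x\sigma},c^\dagger_{x\sigma}$ ($x\in\Lambda$, $\sigma\in\{\uparrow,\downarrow\}$) obeying the canonical anticommutation relations, vacuum $\Phi_0$, $n_{x\sigma}=c^\dagger_{x\sigma}c_{x\sigma}$, electron number operator $\hat N_{\rm e}=\sum_x(n_{x\uparrow}+n_{x\downarrow})$. The Hubbard Hamiltonian is $H=H_{\rm hop}+H_{\rm int}$, $H_{\rm hop}=\sum_{x,y\in\Lambda}\sum_\sigma t_{xy}c^\dagger_{x\sigma}c_{y\sigma}$, $H_{\rm int}=\sum_xU_xn_{x\uparrow}n_{x\downarrow}$, with $(t_{xy})$ real symmetric and all $U_x>0$. Let $\varepsilon_0$ be the smallest eigenvalue of $(t_{xy})$, $\mathcal H_0$ its eigenspace, $N_{\rm d}=\dim\mathcal H_0$, and $\{\varphi^{(u)}\}_{u\in V}$ a linearly independent basis of $\mathcal H_0$ indexed by a finite set $V$; $a^\dagger_{u\sigma}=\sum_x\varphi^{(u)}_xc^\dagger_{x\sigma}$. Two indices $u,v\in V$ are directly connected if $\varphi^{(u)}_x\varphi^{(v)}_x\neq0$ for some $x\in\Lambda$; connected components of a subset of $V$ are taken with respect to the graph of direct connections. For the components $C_1,\dots,C_n$ of $A$ let $\Lambda_k=\{x\in\Lambda:\varphi^{(u)}_x\ne0\text{ for some }u\in C_k\}$ (these are pairwise disjoint), $S^-_x=c^\dagger_{x\downarrow}c_{x\uparrow}$, and $\hat S^-_k=\sum_{x\in\Lambda_k}S^-_x$. *)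

theory Defs
  imports Complex_Main "HOL-Library.Product_Lexorder"
begin

text \<open>Fermionic Fock space over the modes (x, sigma), x in the finite lattice
 (a finite type 'x), sigma :: bool with True = spin up, False = spin down.
 A state is a complex function on the finite sets of occupied modes
 (occupation-number basis, modes ordered by the lexicographic order).\<close>

type_synonym 'x fock = "('x \<times> bool) set \<Rightarrow> complex"

abbreviation Up :: bool where "Up \<equiv> True"
abbreviation Down :: bool where "Down \<equiv> False"

definition fsign :: "('x::linorder \<times> bool) \<Rightarrow> ('x \<times> bool) set \<Rightarrow> complex" where
  "fsign m S = (-1) ^ card {m' \<in> S. m' < m}"

definition cre :: "('x::linorder \<times> bool) \<Rightarrow> 'x fock \<Rightarrow> 'x fock" where
  "cre m \<Psi> = (\<lambda>S. if m \<in> S then fsign m (S - {m}) * \<Psi> (S - {m}) else 0)"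

definition ann :: "('x::linorder \<times> bool) \<Rightarrow> 'x fock \<Rightarrow> 'x fock" where
  "ann m \<Psi> = (\<lambda>S. if m \<in> S then 0 else fsign m S * \<Psi> (insert m S))"

definition vac :: "'x fock" where
  "vac = (\<lambda>S. if S = {} then 1 else 0)"

definition numop :: "('x::linorder \<times> bool) \<Rightarrow> 'x fock \<Rightarrow> 'x fock" where
  "numop m \<Psi> = cre m (ann m \<Psi>)"

definition Nop :: "('x::{finite,linorder}) fock \<Rightarrow> 'x fock" where
  "Nop \<Psi> = (\<lambda>S. \<Sum>x\<in>UNIV. \<Sum>\<sigma>\<in>UNIV. numop (x, \<sigma>) \<Psi> S)"

definition Hhop :: "('x::{finite,linorder} \<Rightarrow> 'x \<Rightarrow> real) \<Rightarrow> 'x fock \<Rightarrow> 'x fock" where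
  "Hhop t \<Psi> = (\<lambda>S. \<Sum>x\<in>UNIV. \<Sum>y\<in>UNIV. \<Sum>\<sigma>\<in>UNIV.
      complex_of_real (t x y) * cre (x, \<sigma>) (ann (y, \<sigma>) \<Psi>) S)"

definition Hint :: "('x::{finite,linorder} \<Rightarrow> real) \<Rightarrow> 'x fock \<Rightarrow> 'x fock" where
  "Hint U \<Psi> = (\<lambda>S. \<Sum>x\<in>UNIV. complex_of_real (U x) * numop (x, Up) (numop (x, Down) \<Psi>) S)"

definition Ham :: "('x::{finite,linorder} \<Rightarrow> 'x \<Rightarrow> real) \<Rightarrow> ('x \<Rightarrow> real) \<Rightarrow> 'x fock \<Rightarrow> 'x fock" where
  "Ham t U \<Psi> = (\<lambda>S. Hhop t \<Psi> S + Hint U \<Psi> S)"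

definition eigspace :: "('x::finite \<Rightarrow> 'x \<Rightarrow> real) \<Rightarrow> real \<Rightarrow> ('x \<Rightarrow> real) set" where
  "eigspace t e = {v. \<forall>x. (\<Sum>y\<in>UNIV. t x y * v y) = e * v x}"

definition is_eigval :: "('x::finite \<Rightarrow> 'x \<Rightarrow> real) \<Rightarrow> real \<Rightarrow> bool" where
  "is_eigval t e \<longleftrightarrow> (\<exists>v\<in>eigspace t e. \<exists>x. v x \<noteq> 0)"

definition is_min_eigval :: "('x::finite \<Rightarrow> 'x \<Rightarrow> real) \<Rightarrow> real \<Rightarrow> bool" where
  "is_min_eigval t e \<longleftrightarrow> is_eigval t e \<and> (\<forall>e'. is_eigval t e' \<longrightarrow> e \<le> e')"

definition is_basis_of :: "('v::finite \<Rightarrow> 'x \<Rightarrow> real) \<Rightarrow> ('x \<Rightarrow> real) set \<Rightarrow> bool" where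
  "is_basis_of \<phi> W \<longleftrightarrow>
     (\<forall>u. \<phi> u \<in> W) \<and>
     (\<forall>c. (\<forall>x. (\<Sum>u\<in>UNIV. c u * \<phi> u x) = 0) \<longrightarrow> (\<forall>u. c u = 0)) \<and>
     (\<forall>v\<in>W. \<exists>c. \<forall>x. v x = (\<Sum>u\<in>UNIV. c u * \<phi> u x))"

definition dconn :: "('v \<Rightarrow> 'x \<Rightarrow> real) \<Rightarrow> 'v \<Rightarrow> 'v \<Rightarrow> bool" where
  "dconn \<phi> u v \<longleftrightarrow> (\<exists>x. \<phi> u x * \<phi> v x \<noteq> 0)"

definition components :: "('v \<Rightarrow> 'x \<Rightarrow> real) \<Rightarrow> 'v set \<Rightarrow> 'v set set" where
  "components \<phi> A =
     {{v \<in> A. (u, v) \<in> {(a, b). a \<in> A \<and> b \<in> A \<and> dconn \<phi> a b}\<^sup>*} | u. u \<in> A}"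

definition Lam :: "('v \<Rightarrow> 'x \<Rightarrow> real) \<Rightarrow> 'v set \<Rightarrow> 'x set" where
  "Lam \<phi> C = {x. \<exists>u\<in>C. \<phi> u x \<noteq> 0}"

definition adag :: "('v \<Rightarrow> 'x::{finite,linorder} \<Rightarrow> real) \<Rightarrow> 'v \<Rightarrow> bool \<Rightarrow> 'x fock \<Rightarrow> 'x fock" where
  "adag \<phi> u \<sigma> \<Psi> = (\<lambda>S. \<Sum>x\<in>UNIV. complex_of_real (\<phi> u x) * cre (x, \<sigma>) \<Psi> S)"

definition Sminus :: "'x::linorder \<Rightarrow> 'x fock \<Rightarrow> 'x fock" where
  "Sminus x \<Psi> = cre (x, Down) (ann (x, Up) \<Psi>)"

definition Sminus_set :: "'x::linorder set \<Rightarrow> 'x fock \<Rightarrow> 'x fock" where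
  "Sminus_set L \<Psi> = (\<lambda>S. \<Sum>x\<in>L. Sminus x \<Psi> S)"

definition PsiA :: "('v::linorder \<Rightarrow> 'x::{finite,linorder} \<Rightarrow> real) \<Rightarrow> 'v set \<Rightarrow> 'x fock" where
  "PsiA \<phi> A = foldr (\<lambda>u. adag \<phi> u Up) (sorted_list_of_set A) vac"

definition PhiAm :: "('v::linorder \<Rightarrow> 'x::{finite,linorder} \<Rightarrow> real) \<Rightarrow> 'v set
     \<Rightarrow> nat \<Rightarrow> (nat \<Rightarrow> 'v set) \<Rightarrow> (nat \<Rightarrow> real) \<Rightarrow> 'x fock" where
  "PhiAm \<phi> A n C m =
     foldr (\<lambda>k. Sminus_set (Lam \<phi> (C k)) ^^ nat \<lfloor>real (card (C k)) / 2 - m k\<rfloor>)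
       [0..<n] (PsiA \<phi> A)"

end

(*
  The amplitude vectors y |-> (c_{y sigma} Phi)(S) of Phi all lie in the span of the orbitals
  phi^(u), u in A: this holds for the vacuum, is preserved by the creation operators
  a^dagger_{u up}, and by each lowering operator S^-_k because Lambda_k contains the supports of
  exactly the orbitals of C_k.  The orbitals are eigenvectors of t, and for such states
  H_hop = eps0 N.  Counting the ways of lowering spins gives Phi(S) explicitly: it vanishes
  unless S is singly occupied with J_k = |C_k|/2 - m_k down spins in each Lambda_k, and then it
  is prod_k J_k! times Psi_A at the configuration with all spins raised.  Hence H_int Phi = 0,
  N Phi = N_e Phi, and Phi is nonzero because Psi_A is; the latter follows from a dual basis of
  the phi^(u), whose annihilators undo the creation operators one by one.

  For the lower bound, <Psi, H_hop Psi> is a sum over sigma and S of the quadratic forms of t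
  at the vectors x |-> (c_{x sigma} Psi)(S), each at least eps0 times the squared norm because
  the minimum of the Rayleigh quotient of a symmetric matrix is attained at an eigenvector,
  while H_int >= 0.
*)

theory Submission
  imports Defs "HOL-Analysis.Cartesian_Space" "HOL-Analysis.Topology_Euclidean_Space"
begin

(* The topological components of HOL-Analysis would shadow the graph components of Defs. *)
hide_const (open) Connected.components

section \<open>Fermion operators\<close>

lemma fsign_mult_self: "fsign m S * fsign m S = 1"
  unfolding fsign_def by (simp flip: power_add)

lemma cnj_fsign: "cnj (fsign m S) = fsign m S"
  unfolding fsign_def by simp

lemma fsign_insert:
  fixes T :: "('x::{finite,linorder} \<times> bool) set"
  assumes "a \<notin> T"
  shows "fsign m (insert a T) = (if a < m then -1 else 1) * fsign m T"
proof -
  have "{m' \<in> insert a T. m' < m} = (if a < m then insert a {m' \<in> T. m' < m} else {m' \<in> T. m' < m})"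
    by auto
  then show ?thesis using assms unfolding fsign_def by auto
qed

lemma ann_cre:
  fixes m n :: "'x::{finite,linorder} \<times> bool"
  shows "ann n (cre m \<Psi>) S = (if n = m then \<Psi> S else 0) - cre m (ann n \<Psi>) S"
proof (cases "n = m")
  case True
  show ?thesis
  proof (cases "m \<in> S")
    case mS: True
    have "insert m (S - {m}) = S" using mS by auto
    then have "cre m (ann n \<Psi>) S = \<Psi> S"
      unfolding cre_def ann_def using mS True fsign_mult_self[of m "S - {m}"]
      by (simp add: mult.assoc[symmetric])
    moreover have "ann n (cre m \<Psi>) S = 0" unfolding ann_def using mS True by simp
    ultimately show ?thesis using True by simp
  next
    case mS: False
    have "insert m S - {m} = S" using mS by auto
    then have "ann n (cre m \<Psi>) S = \<Psi> S"
      unfolding cre_def ann_def using mS True fsign_mult_self[of m S]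
      by (simp add: mult.assoc[symmetric])
    moreover have "cre m (ann n \<Psi>) S = 0" unfolding cre_def using mS by simp
    ultimately show ?thesis using True by simp
  qed
next
  case n_ne_m: False
  show ?thesis
  proof (cases "m \<in> S \<and> n \<notin> S")
    case True
    have s1: "fsign n S = (if m < n then -1 else 1) * fsign n (S - {m})"
      using fsign_insert[of m "S - {m}" n] True by (simp add: insert_absorb)
    have s2: "fsign m (insert n (S - {m})) = (if n < m then -1 else 1) * fsign m (S - {m})"
      using True by (intro fsign_insert) auto
    have "insert n S - {m} = insert n (S - {m})" using n_ne_m by auto
    then have l: "ann n (cre m \<Psi>) S = fsign n S * (fsign m (insert n (S - {m})) * \<Psi> (insert n (S - {m})))"
      unfolding cre_def ann_def using True n_ne_m by simp
    have r: "cre m (ann n \<Psi>) S = fsign m (S - {m}) * (fsign n (S - {m}) * \<Psi> (insert n (S - {m})))"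
      unfolding cre_def ann_def using True n_ne_m by simp
    have "m < n \<or> n < m" using n_ne_m by auto
    then show ?thesis using n_ne_m unfolding l r s1 s2 by auto
  next
    case False
    then show ?thesis unfolding ann_def cre_def using n_ne_m by auto
  qed
qed

lemma ann_ann:
  fixes m n :: "'x::{finite,linorder} \<times> bool"
  shows "ann n (ann m \<Psi>) S = - ann m (ann n \<Psi>) S"
proof (cases "n \<noteq> m \<and> n \<notin> S \<and> m \<notin> S")
  case True
  have s1: "fsign m (insert n S) = (if n < m then -1 else 1) * fsign m S"
    and s2: "fsign n (insert m S) = (if m < n then -1 else 1) * fsign n S"
    using True by (simp_all add: fsign_insert)
  have "m < n \<or> n < m" using True by auto
  then show ?thesis unfolding ann_def using True by (auto simp: s1 s2 insert_commute)
next
  case False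
  then show ?thesis unfolding ann_def by auto
qed

lemma numop_apply: "numop m \<Psi> S = (if m \<in> S then \<Psi> S else 0)"
  unfolding numop_def cre_def ann_def using fsign_mult_self[of m "S - {m}"]
  by (auto simp: insert_absorb)

lemma Nop_apply:
  fixes \<Psi> :: "'x::{finite,linorder} fock"
  shows "Nop \<Psi> S = of_nat (card S) * \<Psi> S"
proof -
  have "Nop \<Psi> S = (\<Sum>x\<in>UNIV. \<Sum>\<sigma>\<in>UNIV. if (x, \<sigma>) \<in> S then \<Psi> S else 0)"
    unfolding Nop_def numop_apply ..
  also have "\<dots> = (\<Sum>p\<in>UNIV. if p \<in> S then \<Psi> S else 0)"
    by (simp add: sum.cartesian_product UNIV_Times_UNIV[symmetric] del: UNIV_Times_UNIV)
  also have "\<dots> = (\<Sum>p\<in>S. \<Psi> S)"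
    by (simp add: sum.If_cases)
  finally show ?thesis by simp
qed

lemma Hint_apply:
  fixes \<Psi> :: "'x::{finite,linorder} fock"
  shows "Hint U \<Psi> S =
    (\<Sum>x\<in>UNIV. complex_of_real (U x) * (if (x, Up) \<in> S \<and> (x, Down) \<in> S then \<Psi> S else 0))"
  unfolding Hint_def numop_apply by (auto intro!: sum.cong)

lemma Sminus_apply:
  fixes x :: "'x::{finite,linorder}"
  shows "Sminus x \<Psi> S =
    (if (x, Down) \<in> S \<and> (x, Up) \<notin> S then \<Psi> (insert (x, Up) (S - {(x, Down)})) else 0)"
proof -
  have "{m' \<in> S - {(x, Down)}. m' < (x, Down)} = {m' \<in> S - {(x, Down)}. m' < (x, Up)}"
    by (auto simp: less_prod_def)
  then have "fsign (x, Down) (S - {(x, Down)}) = fsign (x, Up) (S - {(x, Down)})"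
    unfolding fsign_def by simp
  then show ?thesis
    unfolding Sminus_def cre_def ann_def using fsign_mult_self[of "(x, Up)" "S - {(x, Down)}"]
    by auto
qed

lemma cre_linear: "cre m (\<lambda>S'. \<Sum>i\<in>I. c i * f i S') S = (\<Sum>i\<in>I. c i * cre m (f i) S)"
  unfolding cre_def by (auto simp: sum_distrib_left algebra_simps)

lemma ann_linear: "ann m (\<lambda>S'. \<Sum>i\<in>I. c i * f i S') S = (\<Sum>i\<in>I. c i * ann m (f i) S)"
  unfolding ann_def by (auto simp: sum_distrib_left algebra_simps)

lemma cre_scale: "cre m (\<lambda>S'. c * f S') S = c * cre m f S"
  unfolding cre_def by auto

lemma ann_sum: "ann m (\<lambda>S'. \<Sum>i\<in>I. f i S') S = (\<Sum>i\<in>I. ann m (f i) S)"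
  unfolding ann_def by (auto simp: sum_distrib_left)

lemma adag_nonzero_imp:
  fixes \<phi> :: "'v \<Rightarrow> 'x::{finite,linorder} \<Rightarrow> real"
  assumes "adag \<phi> u \<sigma> \<Psi> S \<noteq> 0"
  shows "\<exists>x. \<phi> u x \<noteq> 0 \<and> (x, \<sigma>) \<in> S \<and> \<Psi> (S - {(x, \<sigma>)}) \<noteq> 0"
proof -
  obtain x where "complex_of_real (\<phi> u x) * cre (x, \<sigma>) \<Psi> S \<noteq> 0"
    using assms sum.not_neutral_contains_not_neutral unfolding adag_def by blast
  then show ?thesis unfolding cre_def by (auto split: if_splits)
qed

lemma adag_linear:
  fixes \<phi> :: "'v \<Rightarrow> 'x::{finite,linorder} \<Rightarrow> real"
  shows "adag \<phi> u \<sigma> (\<lambda>S'. \<Sum>i\<in>I. c i * f i S') S = (\<Sum>i\<in>I. c i * adag \<phi> u \<sigma> (f i) S)"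
  unfolding adag_def cre_linear by (simp add: sum_distrib_left sum.swap[of _ I] algebra_simps)

lemma adag_zero:
  fixes \<phi> :: "'v \<Rightarrow> 'x::{finite,linorder} \<Rightarrow> real"
  shows "adag \<phi> u \<sigma> (\<lambda>S. 0) = (\<lambda>S. 0)"
  unfolding adag_def cre_def by (simp cong: if_cong)

lemma ann_adag:
  fixes \<phi> :: "'v \<Rightarrow> 'x::{finite,linorder} \<Rightarrow> real"
  shows "ann (y, \<tau>) (adag \<phi> u \<sigma> \<Psi>) S =
     (if \<tau> = \<sigma> then complex_of_real (\<phi> u y) * \<Psi> S else 0) - adag \<phi> u \<sigma> (ann (y, \<tau>) \<Psi>) S"
proof -
  have "ann (y, \<tau>) (adag \<phi> u \<sigma> \<Psi>) S
      = (\<Sum>x\<in>UNIV. complex_of_real (\<phi> u x) * ann (y, \<tau>) (cre (x, \<sigma>) \<Psi>) S)"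
    unfolding adag_def by (rule ann_linear)
  also have "\<dots> = (\<Sum>x\<in>UNIV. if (y, \<tau>) = (x, \<sigma>) then complex_of_real (\<phi> u x) * \<Psi> S else 0)
       - adag \<phi> u \<sigma> (ann (y, \<tau>) \<Psi>) S"
    unfolding ann_cre adag_def
    by (simp add: algebra_simps sum_subtractf if_distrib[of "\<lambda>z. _ * z"] cong: if_cong)
  finally show ?thesis by (simp add: if_distrib[of "\<lambda>z. _ * z"] cong: if_cong)
qed

section \<open>The variational lower bound\<close>

lemma quadratic_nonneg_imp_linear_coeff_zero:
  fixes a b :: real
  assumes "\<And>s. 0 \<le> 2 * s * a + s * s * b"
  shows "a = 0"
proof (rule ccontr)
  assume "a \<noteq> 0"
  define c where "c = \<bar>b\<bar> + 1"
  define s where "s = - a / c"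
  have c: "c > 0" "b \<le> c" unfolding c_def by auto
  have "2 * s * a + s * s * b \<le> 2 * s * a + s * s * c"
    using c by (intro add_left_mono mult_left_mono) auto
  also have "\<dots> = - a\<^sup>2 / c"
    using c unfolding s_def by (simp add: field_simps power2_eq_square)
  also have "\<dots> < 0"
    using \<open>a \<noteq> 0\<close> c by (simp add: zero_less_divide_iff)
  finally show False using assms[of s] by simp
qed

lemma symmetric_matrix_min_rayleigh_eigenvector:
  fixes M :: "real^'n^'n"
  assumes sym: "transpose M = M"
  shows "\<exists>v \<mu>. v \<noteq> 0 \<and> M *v v = \<mu> *\<^sub>R v \<and> (\<forall>z. \<mu> * (z \<bullet> z) \<le> z \<bullet> (M *v z))"
proof -
  let ?Q = "\<lambda>z. z \<bullet> (M *v z)"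
  have "continuous_on (sphere 0 1) ((*v) M)"
    using matrix_vector_mul_linear[of M]
    by (simp add: linear_continuous_on linear_conv_bounded_linear linear_matrix_vector_mul_eq)
  then have cont: "continuous_on (sphere 0 1) ?Q"
    by (rule bounded_bilinear.continuous_on[OF bounded_bilinear_inner continuous_on_id])
  have "axis undefined 1 \<in> sphere (0::real^'n) 1"
    by simp
  then have "sphere (0::real^'n) 1 \<noteq> {}"
    by blast
  then obtain v where v: "v \<in> sphere 0 1" and min: "\<forall>z\<in>sphere 0 1. ?Q v \<le> ?Q z"
    using continuous_attains_inf[of "sphere 0 1" ?Q] cont by auto
  define \<mu> where "\<mu> = ?Q v"
  have vv: "v \<bullet> v = 1" using v by (simp add: dot_square_norm)
  have rayleigh: "\<mu> * (z \<bullet> z) \<le> ?Q z" for z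
  proof (cases "z = 0")
    case False
    define z' where "z' = (1 / norm z) *\<^sub>R z"
    have "z' \<in> sphere 0 1" using False unfolding z'_def by simp
    then have "\<mu> \<le> ?Q z'" using min unfolding \<mu>_def by blast
    also have "?Q z' = ?Q z / (z \<bullet> z)"
      unfolding z'_def by (simp add: matrix_vector_mult_scaleR power2_norm_eq_inner[symmetric] power2_eq_square)
    finally show ?thesis using False by (simp add: field_simps)
  qed simp
  have swap: "x \<bullet> (M *v y) = y \<bullet> (M *v x)" for x y
    by (metis dot_lmul_matrix inner_commute sym transpose_matrix_vector)
  define w where "w = M *v v - \<mu> *\<^sub>R v"
  have ww: "w \<bullet> w = w \<bullet> (M *v v) - \<mu> * (w \<bullet> v)"
    by (simp only: w_def inner_diff_right inner_scaleR_right)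
  \<comment> \<open>\<open>v\<close> minimises the nonnegative form \<open>?Q z - \<mu> * (z \<bullet> z)\<close>, so its first variation vanishes\<close>
  have "0 \<le> 2 * s * (w \<bullet> w) + s * s * (?Q w - \<mu> * (w \<bullet> w))" for s
  proof -
    have Q: "?Q (v + s *\<^sub>R w) = \<mu> + 2 * s * (w \<bullet> (M *v v)) + s * s * ?Q w"
      unfolding \<mu>_def using swap[of v w]
      by (simp add: matrix_vector_right_distrib matrix_vector_mult_scaleR inner_add_left inner_add_right algebra_simps)
    have N: "(v + s *\<^sub>R w) \<bullet> (v + s *\<^sub>R w) = 1 + 2 * s * (w \<bullet> v) + s * s * (w \<bullet> w)"
      using vv by (simp add: inner_add_left inner_add_right inner_commute[of v w] algebra_simps)
    have "?Q (v + s *\<^sub>R w) - \<mu> * ((v + s *\<^sub>R w) \<bullet> (v + s *\<^sub>R w))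
        = 2 * s * (w \<bullet> w) + s * s * (?Q w - \<mu> * (w \<bullet> w))"
      unfolding Q N ww by (simp add: algebra_simps)
    then show ?thesis using rayleigh[of "v + s *\<^sub>R w"] by simp
  qed
  then have "w \<bullet> w = 0" by (rule quadratic_nonneg_imp_linear_coeff_zero)
  then have "M *v v = \<mu> *\<^sub>R v" unfolding w_def by simp
  moreover have "v \<noteq> 0" using v by auto
  ultimately show ?thesis using rayleigh by blast
qed

lemma min_eigval_le_rayleigh:
  fixes t :: "'x::finite \<Rightarrow> 'x \<Rightarrow> real"
  assumes sym: "\<forall>x y. t x y = t y x" and min: "is_min_eigval t e"
  shows "e * (\<Sum>x\<in>UNIV. p x * p x) \<le> (\<Sum>x\<in>UNIV. \<Sum>y\<in>UNIV. t x y * p x * p y)"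
proof -
  define M :: "real^'x^'x" where "M = (\<chi> x y. t x y)"
  have "transpose M = M" using sym unfolding M_def transpose_def by (simp add: vec_eq_iff)
  then obtain v \<mu> where v: "v \<noteq> 0" "M *v v = \<mu> *\<^sub>R v"
    and rayleigh: "\<forall>z. \<mu> * (z \<bullet> z) \<le> z \<bullet> (M *v z)"
    using symmetric_matrix_min_rayleigh_eigenvector by blast
  have "(\<lambda>x. v $ x) \<in> eigspace t \<mu>"
    using v(2) unfolding eigspace_def M_def by (simp add: vec_eq_iff matrix_vector_mult_def)
  moreover have "\<exists>x. v $ x \<noteq> 0" using v(1) by (simp add: vec_eq_iff)
  ultimately have "e \<le> \<mu>" using min unfolding is_min_eigval_def is_eigval_def by blast
  define z :: "real^'x" where "z = (\<chi> x. p x)"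
  have "z \<bullet> z = (\<Sum>x\<in>UNIV. p x * p x)" unfolding z_def inner_vec_def by simp
  moreover have "z \<bullet> (M *v z) = (\<Sum>x\<in>UNIV. \<Sum>y\<in>UNIV. t x y * p x * p y)"
    unfolding z_def M_def inner_vec_def matrix_vector_mult_def by (simp add: sum_distrib_left mult_ac)
  moreover have "0 \<le> z \<bullet> z" by simp
  ultimately show ?thesis using rayleigh \<open>e \<le> \<mu>\<close> by (metis mult_right_mono order_trans)
qed

lemma min_eigval_le_rayleigh_complex:
  fixes t :: "'x::finite \<Rightarrow> 'x \<Rightarrow> real" and a :: "'x \<Rightarrow> complex"
  assumes sym: "\<forall>x y. t x y = t y x" and min: "is_min_eigval t e"
  shows "e * Re (\<Sum>x\<in>UNIV. cnj (a x) * a x)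
    \<le> Re (\<Sum>x\<in>UNIV. \<Sum>y\<in>UNIV. complex_of_real (t x y) * (cnj (a x) * a y))"
proof -
  have "Re (\<Sum>x\<in>UNIV. \<Sum>y\<in>UNIV. complex_of_real (t x y) * (cnj (a x) * a y))
      = (\<Sum>x\<in>UNIV. \<Sum>y\<in>UNIV. t x y * Re (a x) * Re (a y)) + (\<Sum>x\<in>UNIV. \<Sum>y\<in>UNIV. t x y * Im (a x) * Im (a y))"
    by (simp add: sum.distrib[symmetric] algebra_simps)
  moreover have "Re (\<Sum>x\<in>UNIV. cnj (a x) * a x)
      = (\<Sum>x\<in>UNIV. Re (a x) * Re (a x)) + (\<Sum>x\<in>UNIV. Im (a x) * Im (a x))"
    by (simp add: sum.distrib[symmetric])
  ultimately show ?thesis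
    using min_eigval_le_rayleigh[OF sym min, of "\<lambda>x. Re (a x)"]
      min_eigval_le_rayleigh[OF sym min, of "\<lambda>x. Im (a x)"]
    by (simp add: distrib_left)
qed

definition fock_inner :: "'x::finite fock \<Rightarrow> 'x fock \<Rightarrow> complex" where
  "fock_inner \<Psi> \<Phi> = (\<Sum>S\<in>UNIV. cnj (\<Psi> S) * \<Phi> S)"

lemma fock_inner_cre:
  fixes \<Psi> \<Phi> :: "'x::{finite,linorder} fock"
  shows "fock_inner \<Psi> (cre m \<Phi>) = fock_inner (ann m \<Psi>) \<Phi>"
proof -
  have inj: "inj_on (insert m) {T. m \<notin> T}"
    unfolding inj_on_def by (metis Diff_insert_absorb mem_Collect_eq)
  have img: "{S. m \<in> S} = insert m ` {T. m \<notin> T}"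
  proof (intro set_eqI iffI)
    fix S assume "S \<in> {S. m \<in> S}"
    then have "S = insert m (S - {m})" "S - {m} \<in> {T. m \<notin> T}" by auto
    then show "S \<in> insert m ` {T. m \<notin> T}" by blast
  qed auto
  have "fock_inner \<Psi> (cre m \<Phi>) =
      (\<Sum>S\<in>UNIV. if m \<in> S then cnj (\<Psi> S) * (fsign m (S - {m}) * \<Phi> (S - {m})) else 0)"
    unfolding fock_inner_def cre_def by (intro sum.cong) auto
  also have "\<dots> = (\<Sum>S\<in>{S. m \<in> S}. cnj (\<Psi> S) * (fsign m (S - {m}) * \<Phi> (S - {m})))"
    by (simp add: sum.If_cases)
  also have "\<dots> = (\<Sum>T\<in>{T. m \<notin> T}. cnj (fsign m T * \<Psi> (insert m T)) * \<Phi> T)"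
    unfolding img sum.reindex[OF inj] by (rule sum.cong) (auto simp: cnj_fsign)
  also have "\<dots> = (\<Sum>S\<in>UNIV. if m \<in> S then 0 else cnj (fsign m S * \<Psi> (insert m S)) * \<Phi> S)"
    by (simp add: sum.If_cases Compl_eq)
  also have "\<dots> = fock_inner (ann m \<Psi>) \<Phi>"
    unfolding fock_inner_def ann_def by (intro sum.cong) auto
  finally show ?thesis .
qed

lemma fock_inner_sum_right: "fock_inner \<Psi> (\<lambda>S. \<Sum>i\<in>I. F i S) = (\<Sum>i\<in>I. fock_inner \<Psi> (F i))"
  unfolding fock_inner_def by (simp add: sum_distrib_left sum.swap[of _ UNIV])

lemma fock_inner_scale_right: "fock_inner \<Psi> (\<lambda>S. c * F S) = c * fock_inner \<Psi> F"
  unfolding fock_inner_def by (simp add: sum_distrib_left mult_ac)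

lemma sum_rotate3:
  "(\<Sum>a\<in>A. \<Sum>b\<in>B. \<Sum>c\<in>C. f a b c) = (\<Sum>b\<in>B. \<Sum>c\<in>C. \<Sum>a\<in>A. f a b c)"
  by (rule trans[OF sum.swap sum.cong[OF refl sum.swap]])

lemma fock_inner_Hhop:
  fixes \<Psi> :: "'x::{finite,linorder} fock"
  shows "fock_inner \<Psi> (Hhop t \<Psi>) = (\<Sum>\<sigma>\<in>UNIV. \<Sum>S\<in>UNIV. \<Sum>x\<in>UNIV. \<Sum>y\<in>UNIV.
     complex_of_real (t x y) * (cnj (ann (x, \<sigma>) \<Psi> S) * ann (y, \<sigma>) \<Psi> S))"
proof -
  have "fock_inner \<Psi> (Hhop t \<Psi>) = (\<Sum>x\<in>UNIV. \<Sum>y\<in>UNIV. \<Sum>\<sigma>\<in>UNIV.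
      complex_of_real (t x y) * fock_inner (ann (x, \<sigma>) \<Psi>) (ann (y, \<sigma>) \<Psi>))"
    by (simp only: Hhop_def fock_inner_sum_right fock_inner_scale_right fock_inner_cre)
  also have "\<dots> = (\<Sum>x\<in>UNIV. \<Sum>\<sigma>\<in>UNIV. \<Sum>S\<in>UNIV. \<Sum>y\<in>UNIV.
     complex_of_real (t x y) * (cnj (ann (x, \<sigma>) \<Psi> S) * ann (y, \<sigma>) \<Psi> S))"
    unfolding fock_inner_def sum_distrib_left by (rule sum.cong[OF refl sum_rotate3])
  also have "\<dots> = (\<Sum>\<sigma>\<in>UNIV. \<Sum>S\<in>UNIV. \<Sum>x\<in>UNIV. \<Sum>y\<in>UNIV.
     complex_of_real (t x y) * (cnj (ann (x, \<sigma>) \<Psi> S) * ann (y, \<sigma>) \<Psi> S))"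
    by (rule sum_rotate3)
  finally show ?thesis .
qed

lemma fock_inner_Nop:
  fixes \<Psi> :: "'x::{finite,linorder} fock"
  shows "fock_inner \<Psi> (Nop \<Psi>) = (\<Sum>\<sigma>\<in>UNIV. \<Sum>S\<in>UNIV. \<Sum>x\<in>UNIV.
     cnj (ann (x, \<sigma>) \<Psi> S) * ann (x, \<sigma>) \<Psi> S)"
proof -
  have "fock_inner \<Psi> (Nop \<Psi>) = (\<Sum>x\<in>UNIV. \<Sum>\<sigma>\<in>UNIV. fock_inner (ann (x, \<sigma>) \<Psi>) (ann (x, \<sigma>) \<Psi>))"
    by (simp only: Nop_def numop_def fock_inner_sum_right fock_inner_cre)
  also have "\<dots> = (\<Sum>\<sigma>\<in>UNIV. \<Sum>S\<in>UNIV. \<Sum>x\<in>UNIV. cnj (ann (x, \<sigma>) \<Psi> S) * ann (x, \<sigma>) \<Psi> S)"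
    unfolding fock_inner_def by (rule sum_rotate3)
  finally show ?thesis .
qed

lemma Re_cnj_mult_self: "Re (cnj z * z) = (cmod z)\<^sup>2"
  by (metis Re_complex_of_real complex_norm_square mult.commute)

lemma Hhop_expectation_ge:
  fixes t :: "'x::{finite,linorder} \<Rightarrow> 'x \<Rightarrow> real"
  assumes sym: "\<forall>x y. t x y = t y x" and min: "is_min_eigval t e"
  shows "e * Re (fock_inner \<Psi> (Nop \<Psi>)) \<le> Re (fock_inner \<Psi> (Hhop t \<Psi>))"
proof -
  have "e * Re (fock_inner \<Psi> (Nop \<Psi>)) = (\<Sum>\<sigma>\<in>UNIV. \<Sum>S\<in>UNIV.
      e * Re (\<Sum>x\<in>UNIV. cnj (ann (x, \<sigma>) \<Psi> S) * ann (x, \<sigma>) \<Psi> S))"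
    unfolding fock_inner_Nop by (simp add: Re_sum sum_distrib_left)
  also have "\<dots> \<le> (\<Sum>\<sigma>\<in>UNIV. \<Sum>S\<in>UNIV. Re (\<Sum>x\<in>UNIV. \<Sum>y\<in>UNIV.
      complex_of_real (t x y) * (cnj (ann (x, \<sigma>) \<Psi> S) * ann (y, \<sigma>) \<Psi> S)))"
    by (intro sum_mono min_eigval_le_rayleigh_complex[OF sym min])
  also have "\<dots> = Re (fock_inner \<Psi> (Hhop t \<Psi>))"
    unfolding fock_inner_Hhop by (simp only: Re_sum)
  finally show ?thesis .
qed

lemma Hint_expectation_nonneg:
  fixes \<Psi> :: "'x::{finite,linorder} fock"
  assumes "\<forall>x. 0 \<le> U x"
  shows "0 \<le> Re (fock_inner \<Psi> (Hint U \<Psi>))"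
proof -
  have "Re (fock_inner \<Psi> (Hint U \<Psi>)) = (\<Sum>S\<in>UNIV. \<Sum>x\<in>UNIV.
      U x * (if (x, Up) \<in> S \<and> (x, Down) \<in> S then Re (cnj (\<Psi> S) * \<Psi> S) else 0))"
    unfolding fock_inner_def Hint_apply sum_distrib_left Re_sum
    by (intro sum.cong refl) (simp add: algebra_simps)
  also have "\<dots> \<ge> 0" using assms by (intro sum_nonneg) (simp add: Re_cnj_mult_self)
  finally show ?thesis .
qed

lemma Ham_eigenvalue_lower_bound:
  fixes t :: "'x::{finite,linorder} \<Rightarrow> 'x \<Rightarrow> real" and \<Psi> :: "'x fock"
  assumes sym: "\<forall>x y. t x y = t y x" and U_nonneg: "\<forall>x. 0 \<le> U x" and min: "is_min_eigval t e"
    and nonzero: "\<exists>S. \<Psi> S \<noteq> 0" and N: "Nop \<Psi> = (\<lambda>S. of_nat Ne * \<Psi> S)"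
    and H: "Ham t U \<Psi> = (\<lambda>S. complex_of_real E * \<Psi> S)"
  shows "real Ne * e \<le> E"
proof -
  define n where "n = Re (fock_inner \<Psi> \<Psi>)"
  obtain S0 where "\<Psi> S0 \<noteq> 0" using nonzero by blast
  then have "n > 0"
    unfolding n_def fock_inner_def Re_sum Re_cnj_mult_self by (intro sum_pos2[of UNIV S0]) auto
  have "real Ne * e * n = e * Re (fock_inner \<Psi> (Nop \<Psi>))"
    unfolding N fock_inner_scale_right n_def by simp
  also have "\<dots> \<le> Re (fock_inner \<Psi> (Hhop t \<Psi>)) + Re (fock_inner \<Psi> (Hint U \<Psi>))"
    using Hhop_expectation_ge[OF sym min, of \<Psi>] Hint_expectation_nonneg[OF U_nonneg, of \<Psi>]
    by linarith
  also have "\<dots> = Re (fock_inner \<Psi> (Ham t U \<Psi>))"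
    unfolding Ham_def fock_inner_def by (simp add: distrib_left sum.distrib)
  also have "\<dots> = E * n"
    unfolding H fock_inner_scale_right n_def by simp
  finally show ?thesis using \<open>n > 0\<close> by simp
qed

section \<open>Spin configurations and spin lowering\<close>

definition singly_occupied :: "('x \<times> bool) set \<Rightarrow> bool" where
  "singly_occupied S \<longleftrightarrow> (\<forall>x. \<not> ((x, Up) \<in> S \<and> (x, Down) \<in> S))"

definition down_sites :: "('x \<times> bool) set \<Rightarrow> 'x set" where
  "down_sites S = {x. (x, Down) \<in> S}"

definition raise_spins :: "'x set \<Rightarrow> ('x \<times> bool) set \<Rightarrow> ('x \<times> bool) set" where
  "raise_spins L S = (\<lambda>(x, \<sigma>). (x, \<sigma> \<or> x \<in> L)) ` S"

lemma mem_raise_spins: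
  "(x, \<sigma>) \<in> raise_spins L S \<longleftrightarrow>
    (if x \<in> L then \<sigma> \<and> ((x, Up) \<in> S \<or> (x, Down) \<in> S) else (x, \<sigma>) \<in> S)"
proof -
  have "(x, \<sigma>) \<in> raise_spins L S \<longleftrightarrow> (\<exists>\<tau>. (x, \<tau>) \<in> S \<and> \<sigma> = (\<tau> \<or> x \<in> L))"
    unfolding raise_spins_def by force
  then show ?thesis by (cases \<sigma>) (auto simp: ex_bool_eq)
qed

lemma raise_spins_eqI:
  assumes "\<And>x \<sigma>. (x, \<sigma>) \<in> raise_spins L S \<longleftrightarrow> (x, \<sigma>) \<in> T"
  shows "raise_spins L S = T"
  using assms by auto

lemma raise_spins_id:
  assumes "down_sites S \<inter> L = {}"
  shows "raise_spins L S = S"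
proof (rule raise_spins_eqI)
  fix x \<sigma>
  show "(x, \<sigma>) \<in> raise_spins L S \<longleftrightarrow> (x, \<sigma>) \<in> S"
    using assms by (cases \<sigma>) (auto simp: mem_raise_spins down_sites_def)
qed

lemma raise_spins_raise_spins: "raise_spins L (raise_spins K S) = raise_spins (L \<union> K) S"
  by (rule raise_spins_eqI) (auto simp: mem_raise_spins)

lemma raise_spins_single:
  "(x, Down) \<in> S \<Longrightarrow> raise_spins {x} S = insert (x, Up) (S - {(x, Down)})"
  by (rule raise_spins_eqI) (auto simp: mem_raise_spins)

lemma singly_occupied_raise_spins:
  "singly_occupied (raise_spins K S) \<longleftrightarrow> (\<forall>x. x \<notin> K \<longrightarrow> \<not> ((x, Up) \<in> S \<and> (x, Down) \<in> S))"
  unfolding singly_occupied_def mem_raise_spins by auto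

lemma singly_occupied_raise_spinsI: "singly_occupied S \<Longrightarrow> singly_occupied (raise_spins K S)"
  unfolding singly_occupied_raise_spins by (simp add: singly_occupied_def)

lemma down_sites_raise_spins: "down_sites (raise_spins K S) = down_sites S - K"
  unfolding down_sites_def mem_raise_spins by auto

lemma card_raise_spins: "singly_occupied S \<Longrightarrow> card (raise_spins K S) = card S"
  unfolding raise_spins_def singly_occupied_def
  by (rule card_image, rule inj_onI) (auto split: prod.splits, (metis (full_types))+)

lemma Sminus_set_apply:
  fixes L :: "'x::{finite,linorder} set"
  shows "Sminus_set L \<Psi> S =
    (\<Sum>x\<in>L. if (x, Down) \<in> S \<and> (x, Up) \<notin> S then \<Psi> (raise_spins {x} S) else 0)"
  unfolding Sminus_set_def Sminus_apply by (intro sum.cong refl) (simp add: raise_spins_single)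

text \<open>Each of the \<open>j!\<close> orders in which the \<open>j\<close> down spins in \<open>L\<close> can have been lowered contributes once.\<close>
lemma Sminus_set_power_apply:
  fixes L :: "'x::{finite,linorder} set" and \<Psi> :: "'x fock"
  assumes supp: "\<forall>S. \<Psi> S \<noteq> 0 \<longrightarrow> singly_occupied S \<and> down_sites S \<inter> L = {}"
  shows "(Sminus_set L ^^ j) \<Psi> S =
    (if singly_occupied S \<and> card (down_sites S \<inter> L) = j
     then of_nat (fact j) * \<Psi> (raise_spins L S) else 0)"
proof (induction j arbitrary: S)
  case 0
  show ?case
    using supp by (cases "singly_occupied S \<and> down_sites S \<inter> L = {}") (auto simp: raise_spins_id)
next
  case (Suc j)
  let ?D = "down_sites S \<inter> L"
  let ?c = "singly_occupied S \<and> card ?D = Suc j"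
  have "(Sminus_set L ^^ Suc j) \<Psi> S = (\<Sum>x\<in>L.
      if (x, Down) \<in> S \<and> (x, Up) \<notin> S then (Sminus_set L ^^ j) \<Psi> (raise_spins {x} S) else 0)"
    by (simp add: Sminus_set_apply)
  also have "\<dots> = (\<Sum>x\<in>L. if x \<in> ?D then (if ?c then of_nat (fact j) * \<Psi> (raise_spins L S) else 0) else 0)"
  proof (intro sum.cong refl)
    fix x assume "x \<in> L"
    show "(if (x, Down) \<in> S \<and> (x, Up) \<notin> S then (Sminus_set L ^^ j) \<Psi> (raise_spins {x} S) else 0)
        = (if x \<in> ?D then (if ?c then of_nat (fact j) * \<Psi> (raise_spins L S) else 0) else 0)"
    proof (cases "(x, Down) \<in> S \<and> (x, Up) \<notin> S")
      case True
      then have "x \<in> ?D" using \<open>x \<in> L\<close> by (simp add: down_sites_def)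
      have "down_sites (raise_spins {x} S) \<inter> L = ?D - {x}"
        by (auto simp: down_sites_raise_spins)
      moreover have "card (?D - {x}) = card ?D - 1" "card ?D > 0"
        using \<open>x \<in> ?D\<close> by (auto simp: card_gt_0_iff)
      ultimately have "card (down_sites (raise_spins {x} S) \<inter> L) = j \<longleftrightarrow> card ?D = Suc j"
        by simp arith
      moreover have "singly_occupied (raise_spins {x} S) \<longleftrightarrow> singly_occupied S"
        using True by (simp add: singly_occupied_raise_spins) (auto simp: singly_occupied_def)
      moreover have "raise_spins L (raise_spins {x} S) = raise_spins L S"
        using \<open>x \<in> L\<close> by (simp add: raise_spins_raise_spins insert_absorb)
      ultimately show ?thesis using True \<open>x \<in> ?D\<close> Suc.IH by simp
    next
      case False
      then show ?thesis by (auto simp: down_sites_def singly_occupied_def)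
    qed
  qed
  also have "\<dots> = (\<Sum>x\<in>L \<inter> ?D. if ?c then of_nat (fact j) * \<Psi> (raise_spins L S) else 0)"
    by (rule sum.inter_restrict[symmetric]) simp
  also have "L \<inter> ?D = ?D" by blast
  also have "(\<Sum>x\<in>?D. if ?c then of_nat (fact j) * \<Psi> (raise_spins L S) else 0)
      = (if ?c then of_nat (fact (Suc j)) * \<Psi> (raise_spins L S) else 0)"
    by (simp add: algebra_simps)
  finally show ?case .
qed

lemma foldr_Sminus_set_apply:
  fixes L :: "'k \<Rightarrow> 'x::{finite,linorder} set" and \<Psi> :: "'x fock"
  assumes disj: "\<forall>k\<in>set ks. \<forall>l\<in>set ks. k \<noteq> l \<longrightarrow> L k \<inter> L l = {}" and "distinct ks"
    and up: "\<forall>S. \<Psi> S \<noteq> 0 \<longrightarrow> down_sites S = {}"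
  shows "foldr (\<lambda>k. Sminus_set (L k) ^^ J k) ks \<Psi> S =
    (if singly_occupied S \<and> down_sites S \<subseteq> (\<Union>k\<in>set ks. L k) \<and> (\<forall>k\<in>set ks. card (down_sites S \<inter> L k) = J k)
     then (\<Prod>k\<in>set ks. of_nat (fact (J k))) * \<Psi> (raise_spins UNIV S) else 0)"
  using disj \<open>distinct ks\<close>
proof (induction ks arbitrary: S)
  case Nil
  show ?case
  proof (cases "down_sites S = {}")
    case True
    then have "singly_occupied S" unfolding down_sites_def singly_occupied_def by auto
    then show ?thesis using True by (simp add: raise_spins_id)
  next
    case False
    then show ?thesis using up by auto
  qed
next
  case (Cons k ks)
  define G where "G = foldr (\<lambda>k. Sminus_set (L k) ^^ J k) ks \<Psi>"
  have IH: "G S = (if singly_occupied S \<and> down_sites S \<subseteq> (\<Union>k\<in>set ks. L k)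
      \<and> (\<forall>k\<in>set ks. card (down_sites S \<inter> L k) = J k)
     then (\<Prod>k\<in>set ks. of_nat (fact (J k))) * \<Psi> (raise_spins UNIV S) else 0)" for S
    unfolding G_def using Cons by auto
  have k: "k \<notin> set ks" using Cons.prems by auto
  have disj_k: "L k \<inter> L l = {}" if "l \<in> set ks" for l using Cons.prems(1) k that by force
  have "\<forall>S. G S \<noteq> 0 \<longrightarrow> singly_occupied S \<and> down_sites S \<inter> L k = {}"
  proof (intro allI impI)
    fix S assume "G S \<noteq> 0"
    then have "singly_occupied S" "down_sites S \<subseteq> (\<Union>l\<in>set ks. L l)"
      using IH[of S] by (simp_all split: if_splits)
    then show "singly_occupied S \<and> down_sites S \<inter> L k = {}" using disj_k by blast
  qed
  then have "foldr (\<lambda>k. Sminus_set (L k) ^^ J k) (k # ks) \<Psi> S =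
      (if singly_occupied S \<and> card (down_sites S \<inter> L k) = J k
       then of_nat (fact (J k)) * G (raise_spins (L k) S) else 0)"
    unfolding G_def by (simp add: Sminus_set_power_apply)
  moreover have "(down_sites S - L k) \<inter> L l = down_sites S \<inter> L l" if "l \<in> set ks" for l
    using disj_k[OF that] by blast
  moreover have "down_sites S - L k \<subseteq> (\<Union>k\<in>set ks. L k) \<longleftrightarrow> down_sites S \<subseteq> (\<Union>k\<in>set (k # ks). L k)"
    by auto
  ultimately show ?case using k
    by (cases "singly_occupied S")
      (auto simp: IH down_sites_raise_spins raise_spins_raise_spins singly_occupied_raise_spinsI)
qed

lemma foldr_Sminus_set_nonzero:
  fixes L :: "'k \<Rightarrow> 'x::{finite,linorder} set" and \<Psi> :: "'x fock"
  assumes disj: "\<forall>k\<in>set ks. \<forall>l\<in>set ks. k \<noteq> l \<longrightarrow> L k \<inter> L l = {}" and "distinct ks"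
    and up: "\<forall>S. \<Psi> S \<noteq> 0 \<longrightarrow> down_sites S = {}"
    and nonzero: "\<Psi> S0 \<noteq> 0" and room: "\<forall>k\<in>set ks. J k \<le> card {x \<in> L k. (x, Up) \<in> S0}"
  shows "\<exists>S. foldr (\<lambda>k. Sminus_set (L k) ^^ J k) ks \<Psi> S \<noteq> 0"
proof -
  define X where "X = {x. (x, Up) \<in> S0}"
  have S0: "(x, \<sigma>) \<in> S0 \<longleftrightarrow> \<sigma> \<and> x \<in> X" for x \<sigma>
    using up nonzero unfolding X_def down_sites_def by (cases \<sigma>) auto
  have "\<exists>D. D \<subseteq> L k \<inter> X \<and> card D = J k" if "k \<in> set ks" for k
  proof -
    have "{x \<in> L k. (x, Up) \<in> S0} = L k \<inter> X" unfolding X_def by blast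
    then have "J k \<le> card (L k \<inter> X)" using room that by metis
    then obtain D where "D \<subseteq> L k \<inter> X" "card D = J k" by (rule obtain_subset_with_card_n)
    then show ?thesis by blast
  qed
  then obtain D where D: "\<And>k. k \<in> set ks \<Longrightarrow> D k \<subseteq> L k \<inter> X \<and> card (D k) = J k"
    by metis
  define DA where "DA = (\<Union>k\<in>set ks. D k)"
  define S where "S = (\<lambda>x. (x, x \<notin> DA)) ` X"
  have S: "(x, \<sigma>) \<in> S \<longleftrightarrow> x \<in> X \<and> \<sigma> = (x \<notin> DA)" for x \<sigma>
    unfolding S_def by auto
  have "down_sites S = DA" using D unfolding down_sites_def S DA_def by auto
  moreover have "DA \<inter> L k = D k" if k: "k \<in> set ks" for k
  proof
    show "D k \<subseteq> DA \<inter> L k" using D[OF k] k unfolding DA_def by blast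
    show "DA \<inter> L k \<subseteq> D k"
    proof
      fix x assume x: "x \<in> DA \<inter> L k"
      then obtain l where l: "l \<in> set ks" "x \<in> D l" unfolding DA_def by blast
      then have "x \<in> L l \<inter> L k" using D x by blast
      then have "l = k" using disj l(1) k by blast
      then show "x \<in> D k" using l(2) by simp
    qed
  qed
  moreover have "singly_occupied S" unfolding singly_occupied_def S by auto
  moreover have "raise_spins UNIV S = S0"
    by (rule raise_spins_eqI) (auto simp: mem_raise_spins S S0)
  moreover have "DA \<subseteq> (\<Union>k\<in>set ks. L k)" using D unfolding DA_def by blast
  ultimately have "foldr (\<lambda>k. Sminus_set (L k) ^^ J k) ks \<Psi> S = (\<Prod>k\<in>set ks. of_nat (fact (J k))) * \<Psi> S0"
    using D by (simp add: foldr_Sminus_set_apply[OF disj \<open>distinct ks\<close> up])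
  moreover have "(\<Prod>k\<in>set ks. of_nat (fact (J k)) :: complex) \<noteq> 0"
    by (simp add: prod_zero_iff)
  ultimately show ?thesis using nonzero by (metis mult_eq_0_iff)
qed

section \<open>The fully polarised state\<close>

lemma independent_imp_dual_family:
  fixes \<phi> :: "'v::finite \<Rightarrow> 'x::finite \<Rightarrow> real"
  assumes indep: "\<forall>c. (\<forall>x. (\<Sum>u\<in>UNIV. c u * \<phi> u x) = 0) \<longrightarrow> (\<forall>u. c u = 0)"
  shows "\<exists>\<psi>. \<forall>u v. (\<Sum>x\<in>UNIV. \<psi> v x * \<phi> u x) = (if u = v then 1 else 0)"
proof -
  define P :: "real^'v^'x" where "P = (\<chi> x u. \<phi> u x)"
  have "\<forall>c. P *v c = 0 \<longrightarrow> c = 0"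
  proof (intro allI impI)
    fix c assume "P *v c = 0"
    then have "\<forall>x. (\<Sum>u\<in>UNIV. c $ u * \<phi> u x) = 0"
      unfolding P_def by (simp add: vec_eq_iff matrix_vector_mult_def mult.commute)
    then show "c = 0" using indep by (simp add: vec_eq_iff)
  qed
  then obtain B :: "real^'x^'v" where B: "B ** P = mat 1"
    using matrix_left_invertible_ker by blast
  have "(\<Sum>x\<in>UNIV. B $ v $ x * \<phi> u x) = (if u = v then 1 else 0)" for u v
    using arg_cong[OF B, of "\<lambda>M. M $ v $ u"] unfolding P_def
    by (auto simp: matrix_matrix_mult_def mat_def)
  then show ?thesis by (intro exI[of _ "\<lambda>v x. B $ v $ x"]) simp
qed

definition dual_ann :: "('v \<Rightarrow> 'x::{finite,linorder} \<Rightarrow> real) \<Rightarrow> 'v \<Rightarrow> 'x fock \<Rightarrow> 'x fock" where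
  "dual_ann \<psi> v \<Psi> = (\<lambda>S. \<Sum>x\<in>UNIV. complex_of_real (\<psi> v x) * ann (x, Up) \<Psi> S)"

lemma dual_ann_zero: "dual_ann \<psi> v (\<lambda>S. 0) = (\<lambda>S. 0)"
  unfolding dual_ann_def ann_def by (simp cong: if_cong)

lemma dual_ann_vac: "dual_ann \<psi> v vac = (\<lambda>S. 0)"
  unfolding dual_ann_def ann_def vac_def by (simp cong: if_cong)

lemma dual_ann_adag:
  fixes \<phi> \<psi> :: "'v \<Rightarrow> 'x::{finite,linorder} \<Rightarrow> real"
  assumes dual: "\<forall>u v. (\<Sum>x\<in>UNIV. \<psi> v x * \<phi> u x) = (if u = v then 1 else 0)"
  shows "dual_ann \<psi> v (adag \<phi> u Up \<Psi>) S = (if u = v then \<Psi> S else 0) - adag \<phi> u Up (dual_ann \<psi> v \<Psi>) S"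
proof -
  have "dual_ann \<psi> v (adag \<phi> u Up \<Psi>) S
      = complex_of_real (\<Sum>x\<in>UNIV. \<psi> v x * \<phi> u x) * \<Psi> S
        - (\<Sum>x\<in>UNIV. complex_of_real (\<psi> v x) * adag \<phi> u Up (ann (x, Up) \<Psi>) S)"
    unfolding dual_ann_def ann_adag
    by (simp add: right_diff_distrib sum_subtractf sum_distrib_right mult.assoc)
  also have "(\<Sum>x\<in>UNIV. complex_of_real (\<psi> v x) * adag \<phi> u Up (ann (x, Up) \<Psi>) S)
      = adag \<phi> u Up (dual_ann \<psi> v \<Psi>) S"
    unfolding dual_ann_def by (rule adag_linear[symmetric])
  finally show ?thesis using dual by simp
qed

text \<open>The dual annihilator \<open>dual_ann \<psi> v\<close> undoes \<open>adag \<phi> v Up\<close> and kills all other factors.\<close>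
lemma foldr_adag_vac_nonzero:
  fixes \<phi> \<psi> :: "'v \<Rightarrow> 'x::{finite,linorder} \<Rightarrow> real"
  assumes dual: "\<forall>u v. (\<Sum>x\<in>UNIV. \<psi> v x * \<phi> u x) = (if u = v then 1 else 0)"
    and "distinct us"
  shows "(\<exists>S. foldr (\<lambda>u. adag \<phi> u Up) us vac S \<noteq> 0) \<and>
         (\<forall>v. v \<notin> set us \<longrightarrow> dual_ann \<psi> v (foldr (\<lambda>u. adag \<phi> u Up) us vac) = (\<lambda>S. 0))"
  using \<open>distinct us\<close>
proof (induction us)
  case Nil
  have "vac {} \<noteq> 0" unfolding vac_def by simp
  then show ?case using dual_ann_vac by auto
next
  case (Cons u us)
  define P where "P = foldr (\<lambda>u. adag \<phi> u Up) us vac"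
  have nonzero: "\<exists>S. P S \<noteq> 0" and killed: "\<forall>v. v \<notin> set us \<longrightarrow> dual_ann \<psi> v P = (\<lambda>S. 0)"
    using Cons unfolding P_def by auto
  have "u \<notin> set us" using Cons.prems by simp
  then have "dual_ann \<psi> u P = (\<lambda>S. 0)" using killed by blast
  then have undo: "dual_ann \<psi> u (adag \<phi> u Up P) = P"
    by (intro ext) (simp add: dual_ann_adag[OF dual] adag_zero)
  have "\<exists>S. adag \<phi> u Up P S \<noteq> 0"
  proof (rule contrapos_pp[OF nonzero])
    assume "\<not> (\<exists>S. adag \<phi> u Up P S \<noteq> 0)"
    then have "adag \<phi> u Up P = (\<lambda>S. 0)" by auto
    then have "P = (\<lambda>S. 0)" using undo dual_ann_zero by metis
    then show "\<not> (\<exists>S. P S \<noteq> 0)" by simp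
  qed
  moreover have "dual_ann \<psi> v (adag \<phi> u Up P) = (\<lambda>S. 0)" if "v \<notin> set (u # us)" for v
  proof -
    have "dual_ann \<psi> v P = (\<lambda>S. 0)" "u \<noteq> v" using that killed by auto
    then show ?thesis by (intro ext) (simp add: dual_ann_adag[OF dual] adag_zero)
  qed
  ultimately show ?case unfolding P_def by simp
qed

lemma PsiA_nonzero:
  fixes \<phi> :: "'v::{finite,linorder} \<Rightarrow> 'x::{finite,linorder} \<Rightarrow> real"
  assumes "\<forall>c. (\<forall>x. (\<Sum>u\<in>UNIV. c u * \<phi> u x) = 0) \<longrightarrow> (\<forall>u. c u = 0)"
  shows "\<exists>S. PsiA \<phi> A S \<noteq> 0"
proof -
  obtain \<psi> where "\<forall>u v. (\<Sum>x\<in>UNIV. \<psi> v x * \<phi> u x) = (if u = v then 1 else 0)"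
    using independent_imp_dual_family[OF assms] by blast
  then show ?thesis
    unfolding PsiA_def using foldr_adag_vac_nonzero[of \<psi> \<phi>] by simp
qed

definition isolates :: "('v \<Rightarrow> 'x \<Rightarrow> real) \<Rightarrow> 'v set \<Rightarrow> 'v set \<Rightarrow> 'x set \<Rightarrow> bool" where
  "isolates \<phi> A C L \<longleftrightarrow> (\<forall>u\<in>A. \<forall>x. \<phi> u x \<noteq> 0 \<longrightarrow> (x \<in> L \<longleftrightarrow> u \<in> C))"

lemma foldr_adag_vac_support:
  fixes \<phi> :: "'v \<Rightarrow> 'x::{finite,linorder} \<Rightarrow> real"
  assumes iso: "isolates \<phi> A C L"
  shows "distinct us \<Longrightarrow> set us \<subseteq> A \<Longrightarrow> foldr (\<lambda>u. adag \<phi> u Up) us vac S \<noteq> 0 \<Longrightarrow>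
     down_sites S = {} \<and> card S = length us \<and> card {x \<in> L. (x, Up) \<in> S} = card (set us \<inter> C)"
proof (induction us arbitrary: S)
  case Nil
  then have "S = {}" unfolding vac_def by (auto split: if_splits)
  then show ?case by (simp add: down_sites_def)
next
  case (Cons u us)
  obtain x where x: "\<phi> u x \<noteq> 0" "(x, Up) \<in> S"
    and nonzero: "foldr (\<lambda>u. adag \<phi> u Up) us vac (S - {(x, Up)}) \<noteq> 0"
    using adag_nonzero_imp[of \<phi> u Up _ S] Cons.prems(3) by auto
  define S' where "S' = S - {(x, Up)}"
  have IH: "down_sites S' = {} \<and> card S' = length us \<and> card {x \<in> L. (x, Up) \<in> S'} = card (set us \<inter> C)"
    using Cons.IH[of S'] Cons.prems nonzero unfolding S'_def by auto
  have S: "S = insert (x, Up) S'" "(x, Up) \<notin> S'" using x unfolding S'_def by auto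
  have u: "u \<notin> set us" "u \<in> A" using Cons.prems by auto
  have "x \<in> L \<longleftrightarrow> u \<in> C" using iso x(1) u(2) unfolding isolates_def by blast
  moreover have "{y \<in> L. (y, Up) \<in> S} =
      (if x \<in> L then insert x {y \<in> L. (y, Up) \<in> S'} else {y \<in> L. (y, Up) \<in> S'})"
    using S by auto
  moreover have "set (u # us) \<inter> C = (if u \<in> C then insert u (set us \<inter> C) else set us \<inter> C)"
    by auto
  ultimately have "card {y \<in> L. (y, Up) \<in> S} = card (set (u # us) \<inter> C)"
    using IH S(2) u(1) by simp
  then show ?case using IH S by (simp add: down_sites_def)
qed

lemma PsiA_support:
  fixes \<phi> :: "'v::{finite,linorder} \<Rightarrow> 'x::{finite,linorder} \<Rightarrow> real"
  assumes "PsiA \<phi> A S \<noteq> 0"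
  shows "down_sites S = {}" and "card S = card A"
    and "isolates \<phi> A C L \<Longrightarrow> C \<subseteq> A \<Longrightarrow> card {x \<in> L. (x, Up) \<in> S} = card C"
proof -
  have "isolates \<phi> A A UNIV" unfolding isolates_def by blast
  note support = foldr_adag_vac_support[OF _ _ _ assms[unfolded PsiA_def]]
  show "down_sites S = {}" and "card S = card A"
    using support[OF \<open>isolates \<phi> A A UNIV\<close>] by simp_all
  show "card {x \<in> L. (x, Up) \<in> S} = card C" if "isolates \<phi> A C L" "C \<subseteq> A"
    using support[OF that(1)] that(2) by (simp add: Int_absorb1)
qed

section \<open>Annihilation amplitudes in the orbital span\<close>

definition in_span :: "('v::finite \<Rightarrow> 'x \<Rightarrow> real) \<Rightarrow> 'v set \<Rightarrow> ('x \<Rightarrow> complex) \<Rightarrow> bool" where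
  "in_span \<phi> A f \<longleftrightarrow> (\<exists>c. f = (\<lambda>y. \<Sum>u\<in>A. c u * complex_of_real (\<phi> u y)))"

lemma in_span_zero: "in_span \<phi> A (\<lambda>y. 0)"
  unfolding in_span_def by (rule exI[of _ "\<lambda>u. 0"]) simp

lemma in_span_add:
  assumes "in_span \<phi> A f" and "in_span \<phi> A g"
  shows "in_span \<phi> A (\<lambda>y. f y + g y)"
proof -
  obtain c d where "f = (\<lambda>y. \<Sum>u\<in>A. c u * complex_of_real (\<phi> u y))"
    and "g = (\<lambda>y. \<Sum>u\<in>A. d u * complex_of_real (\<phi> u y))"
    using assms unfolding in_span_def by blast
  then show ?thesis
    unfolding in_span_def by (intro exI[of _ "\<lambda>u. c u + d u"]) (simp add: algebra_simps sum.distrib)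
qed

lemma in_span_scale:
  assumes "in_span \<phi> A f"
  shows "in_span \<phi> A (\<lambda>y. a * f y)"
proof -
  obtain c where "f = (\<lambda>y. \<Sum>u\<in>A. c u * complex_of_real (\<phi> u y))"
    using assms unfolding in_span_def by blast
  then show ?thesis
    unfolding in_span_def by (intro exI[of _ "\<lambda>u. a * c u"]) (simp add: sum_distrib_left mult.assoc)
qed

lemma in_span_diff: "in_span \<phi> A f \<Longrightarrow> in_span \<phi> A g \<Longrightarrow> in_span \<phi> A (\<lambda>y. f y - g y)"
  using in_span_add[of \<phi> A f "\<lambda>y. (-1) * g y"] in_span_scale[of \<phi> A g "-1"] by simp

lemma in_span_sum:
  "finite I \<Longrightarrow> (\<And>i. i \<in> I \<Longrightarrow> in_span \<phi> A (f i)) \<Longrightarrow> in_span \<phi> A (\<lambda>y. \<Sum>i\<in>I. f i y)"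
  by (induction I rule: finite_induct) (simp_all add: in_span_zero in_span_add)

lemma in_span_orbital: "u \<in> A \<Longrightarrow> in_span \<phi> A (\<lambda>y. a * complex_of_real (\<phi> u y))"
  unfolding in_span_def
  by (intro exI[of _ "\<lambda>v. if v = u then a else 0"])
    (simp add: if_distrib[of "\<lambda>c. c * _"] sum.delta cong: if_cong)

text \<open>Restricting to the sites \<open>L\<close> of an isolated block \<open>C\<close> keeps exactly the orbitals of \<open>C\<close>.\<close>
lemma in_span_restrict:
  assumes f: "in_span \<phi> A f" and iso: "isolates \<phi> A C L"
  shows "in_span \<phi> A (\<lambda>y. if y \<in> L then f y else 0)"
proof -
  obtain c where c: "f = (\<lambda>y. \<Sum>u\<in>A. c u * complex_of_real (\<phi> u y))"
    using f unfolding in_span_def by blast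
  have restrict: "(if y \<in> L then f y else 0)
      = (\<Sum>u\<in>A. (if u \<in> C then c u else 0) * complex_of_real (\<phi> u y))" for y
  proof (cases "y \<in> L")
    case True
    have "c u * complex_of_real (\<phi> u y) = (if u \<in> C then c u else 0) * complex_of_real (\<phi> u y)"
      if "u \<in> A" for u
      using iso that True unfolding isolates_def by (cases "\<phi> u y = 0") auto
    then show ?thesis using True unfolding c by (auto intro: sum.cong)
  next
    case False
    have "(if u \<in> C then c u else 0) * complex_of_real (\<phi> u y) = 0" if "u \<in> A" for u
      using iso that False unfolding isolates_def by (cases "\<phi> u y = 0") auto
    then show ?thesis using False by (simp add: sum.neutral)
  qed
  show ?thesis
    unfolding in_span_def by (rule exI[of _ "\<lambda>u. if u \<in> C then c u else 0"], rule ext, rule restrict)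
qed

lemma in_span_eigen:
  assumes eig: "\<forall>u. \<phi> u \<in> eigspace t e" and f: "in_span \<phi> A f"
  shows "(\<Sum>y\<in>UNIV. complex_of_real (t x y) * f y) = complex_of_real e * f x"
proof -
  obtain c where c: "f = (\<lambda>y. \<Sum>u\<in>A. c u * complex_of_real (\<phi> u y))"
    using f unfolding in_span_def by blast
  have eigen: "(\<Sum>y\<in>UNIV. complex_of_real (t x y) * complex_of_real (\<phi> u y))
      = complex_of_real e * complex_of_real (\<phi> u x)" for u
  proof -
    have "(\<Sum>y\<in>UNIV. t x y * \<phi> u y) = e * \<phi> u x" using eig unfolding eigspace_def by blast
    then show ?thesis by (simp flip: of_real_mult of_real_sum)
  qed
  have "(\<Sum>y\<in>UNIV. complex_of_real (t x y) * f y)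
      = (\<Sum>u\<in>A. c u * (\<Sum>y\<in>UNIV. complex_of_real (t x y) * complex_of_real (\<phi> u y)))"
    unfolding c sum_distrib_left by (subst sum.swap) (simp add: mult_ac)
  also have "\<dots> = complex_of_real e * f x"
    unfolding eigen c by (simp add: sum_distrib_left mult_ac)
  finally show ?thesis .
qed

lemma in_span_cre:
  fixes F :: "'i \<Rightarrow> 'x::{finite,linorder} fock"
  assumes "\<forall>S'. in_span \<phi> A (\<lambda>y. F y S')"
  shows "in_span \<phi> A (\<lambda>y. cre m (F y) S)"
  using assms in_span_scale[of \<phi> A "\<lambda>y. F y (S - {m})" "fsign m (S - {m})"] in_span_zero
  unfolding cre_def by (cases "m \<in> S") simp_all

lemma in_span_ann:
  fixes F :: "'i \<Rightarrow> 'x::{finite,linorder} fock"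
  assumes "\<forall>S'. in_span \<phi> A (\<lambda>y. F y S')"
  shows "in_span \<phi> A (\<lambda>y. ann m (F y) S)"
  using assms in_span_scale[of \<phi> A "\<lambda>y. F y (insert m S)" "fsign m S"] in_span_zero
  unfolding ann_def by (cases "m \<in> S") simp_all

lemma in_span_adag:
  fixes F :: "'i \<Rightarrow> 'x::{finite,linorder} fock"
  assumes "\<forall>S'. in_span \<phi> A (\<lambda>y. F y S')"
  shows "in_span \<phi> A (\<lambda>y. adag \<phi>' u \<sigma> (F y) S)"
  unfolding adag_def by (rule in_span_sum) (simp_all add: in_span_scale in_span_cre[OF assms])

lemma in_span_Sminus_set:
  fixes F :: "'i \<Rightarrow> 'x::{finite,linorder} fock"
  assumes "\<forall>S'. in_span \<phi> A (\<lambda>y. F y S')"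
  shows "in_span \<phi> A (\<lambda>y. Sminus_set L (F y) S)"
  unfolding Sminus_set_def Sminus_def by (rule in_span_sum) (auto intro!: in_span_cre in_span_ann assms)

definition ann_in_span :: "('v::finite \<Rightarrow> 'x::{finite,linorder} \<Rightarrow> real) \<Rightarrow> 'v set \<Rightarrow> 'x fock \<Rightarrow> bool" where
  "ann_in_span \<phi> A \<Psi> \<longleftrightarrow> (\<forall>\<sigma> S. in_span \<phi> A (\<lambda>y. ann (y, \<sigma>) \<Psi> S))"

lemma ann_in_span_vac: "ann_in_span \<phi> A vac"
  unfolding ann_in_span_def ann_def vac_def using in_span_zero by (simp cong: if_cong)

lemma ann_in_span_adag:
  assumes \<Psi>: "ann_in_span \<phi> A \<Psi>" and u: "u \<in> A"
  shows "ann_in_span \<phi> A (adag \<phi> u \<sigma> \<Psi>)"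
  unfolding ann_in_span_def
proof (intro allI)
  fix \<tau> S
  have "in_span \<phi> A (\<lambda>y. if \<tau> = \<sigma> then complex_of_real (\<phi> u y) * \<Psi> S else 0)"
    using in_span_orbital[OF u, of \<phi> "\<Psi> S"] in_span_zero by (cases "\<tau> = \<sigma>") (simp_all add: mult.commute)
  moreover have "in_span \<phi> A (\<lambda>y. adag \<phi> u \<sigma> (ann (y, \<tau>) \<Psi>) S)"
    using \<Psi> unfolding ann_in_span_def by (intro in_span_adag) blast
  ultimately show "in_span \<phi> A (\<lambda>y. ann (y, \<tau>) (adag \<phi> u \<sigma> \<Psi>) S)"
    unfolding ann_adag by (rule in_span_diff)
qed

lemma ann_Sminus_set:
  fixes L :: "'x::{finite,linorder} set"
  shows "ann (y, \<sigma>) (Sminus_set L \<Psi>) S =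
    (if \<sigma> = Down \<and> y \<in> L then ann (y, Up) \<Psi> S else 0) + Sminus_set L (ann (y, \<sigma>) \<Psi>) S"
proof -
  have anti: "ann (y, \<sigma>) (ann (x, Up) \<Psi>) = (\<lambda>S'. (-1) * ann (x, Up) (ann (y, \<sigma>) \<Psi>) S')" for x
    by (rule ext) (simp add: ann_ann[of "(y, \<sigma>)"])
  have "ann (y, \<sigma>) (Sminus_set L \<Psi>) S = (\<Sum>x\<in>L. ann (y, \<sigma>) (cre (x, Down) (ann (x, Up) \<Psi>)) S)"
    unfolding Sminus_set_def Sminus_def by (rule ann_sum)
  also have "\<dots> = (\<Sum>x\<in>L. if (y, \<sigma>) = (x, Down) then ann (x, Up) \<Psi> S else 0)
      + (\<Sum>x\<in>L. cre (x, Down) (ann (x, Up) (ann (y, \<sigma>) \<Psi>)) S)"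
    unfolding ann_cre anti cre_scale by (simp add: sum.distrib)
  also have "(\<Sum>x\<in>L. if (y, \<sigma>) = (x, Down) then ann (x, Up) \<Psi> S else 0)
     = (if \<sigma> = Down \<and> y \<in> L then ann (y, Up) \<Psi> S else 0)"
    by (cases \<sigma>) (simp_all add: sum.delta')
  finally show ?thesis unfolding Sminus_set_def Sminus_def by simp
qed

lemma ann_in_span_Sminus_set:
  assumes \<Psi>: "ann_in_span \<phi> A \<Psi>" and iso: "isolates \<phi> A C L"
  shows "ann_in_span \<phi> A (Sminus_set L \<Psi>)"
  unfolding ann_in_span_def
proof (intro allI)
  fix \<sigma> S
  have "in_span \<phi> A (\<lambda>y. if y \<in> L then ann (y, Up) \<Psi> S else 0)"
    using in_span_restrict[OF _ iso] \<Psi> unfolding ann_in_span_def by blast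
  then have "in_span \<phi> A (\<lambda>y. if \<sigma> = Down \<and> y \<in> L then ann (y, Up) \<Psi> S else 0)"
    using in_span_zero by (cases \<sigma>) simp_all
  moreover have "in_span \<phi> A (\<lambda>y. Sminus_set L (ann (y, \<sigma>) \<Psi>) S)"
    using \<Psi> unfolding ann_in_span_def by (intro in_span_Sminus_set) blast
  ultimately show "in_span \<phi> A (\<lambda>y. ann (y, \<sigma>) (Sminus_set L \<Psi>) S)"
    unfolding ann_Sminus_set by (rule in_span_add)
qed

lemma ann_in_span_foldr_Sminus_set:
  assumes "ann_in_span \<phi> A \<Psi>" and "\<forall>k\<in>set ks. isolates \<phi> A (C k) (L k)"
  shows "ann_in_span \<phi> A (foldr (\<lambda>k. Sminus_set (L k) ^^ J k) ks \<Psi>)"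
  using assms(2)
proof (induction ks)
  case (Cons k ks)
  have "ann_in_span \<phi> A ((Sminus_set (L k) ^^ j) (foldr (\<lambda>k. Sminus_set (L k) ^^ J k) ks \<Psi>))" for j
    using Cons by (induction j) (auto intro: ann_in_span_Sminus_set)
  then show ?case by simp
qed (simp add: assms(1))

lemma ann_in_span_PsiA: "ann_in_span \<phi> A (PsiA \<phi> A)"
proof -
  have "set us \<subseteq> A \<Longrightarrow> ann_in_span \<phi> A (foldr (\<lambda>u. adag \<phi> u Up) us vac)" for us
    by (induction us) (simp_all add: ann_in_span_vac ann_in_span_adag)
  then show ?thesis unfolding PsiA_def by simp
qed

lemma Hhop_eq_Nop_if_ann_in_span:
  fixes t :: "'x::{finite,linorder} \<Rightarrow> 'x \<Rightarrow> real"
  assumes eig: "\<forall>u. \<phi> u \<in> eigspace t e" and \<Phi>: "ann_in_span \<phi> A \<Phi>"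
  shows "Hhop t \<Phi> S = complex_of_real e * Nop \<Phi> S"
proof -
  have hop: "(\<Sum>y\<in>UNIV. complex_of_real (t x y) * ann (y, \<sigma>) \<Phi> S') = complex_of_real e * ann (x, \<sigma>) \<Phi> S'"
    for x \<sigma> S'
    using \<Phi> unfolding ann_in_span_def by (intro in_span_eigen[OF eig]) blast
  have "Hhop t \<Phi> S = (\<Sum>x\<in>UNIV. \<Sum>\<sigma>\<in>UNIV.
      cre (x, \<sigma>) (\<lambda>S'. \<Sum>y\<in>UNIV. complex_of_real (t x y) * ann (y, \<sigma>) \<Phi> S') S)"
    unfolding Hhop_def cre_linear by (intro sum.cong refl sum.swap)
  also have "\<dots> = complex_of_real e * Nop \<Phi> S"
    unfolding hop cre_scale Nop_def numop_def by (simp add: sum_distrib_left)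
  finally show ?thesis .
qed

section \<open>Connected components\<close>

lemma components_subset: "C \<in> components \<phi> A \<Longrightarrow> C \<subseteq> A"
  unfolding Defs.components_def by auto

lemma components_isolate:
  assumes "C \<in> components \<phi> A"
  shows "isolates \<phi> A C (Lam \<phi> C)"
  unfolding isolates_def
proof (intro ballI allI impI iffI)
  fix u x assume u: "u \<in> A" and ux: "\<phi> u x \<noteq> 0" and "x \<in> Lam \<phi> C"
  let ?R = "{(a, b). a \<in> A \<and> b \<in> A \<and> dconn \<phi> a b}"
  obtain w where w: "w \<in> A" "C = {v \<in> A. (w, v) \<in> ?R\<^sup>*}"
    using assms unfolding Defs.components_def by blast
  obtain v where v: "v \<in> C" "\<phi> v x \<noteq> 0" using \<open>x \<in> Lam \<phi> C\<close> unfolding Lam_def by blast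
  have "(v, u) \<in> ?R" using v w u ux unfolding dconn_def by auto
  then have "(w, u) \<in> ?R\<^sup>*" using v w by (auto intro: rtrancl_into_rtrancl)
  then show "u \<in> C" using w u by auto
qed (auto simp: Lam_def)

lemma components_eq:
  assumes "C1 \<in> components \<phi> A" and "C2 \<in> components \<phi> A" and "v \<in> C1" "v \<in> C2"
  shows "C1 = C2"
proof -
  let ?R = "{(a, b). a \<in> A \<and> b \<in> A \<and> dconn \<phi> a b}"
  have "sym (?R\<^sup>*)" by (rule sym_rtrancl) (auto simp: sym_def dconn_def mult.commute)
  obtain w1 where w1: "C1 = {v \<in> A. (w1, v) \<in> ?R\<^sup>*}" using assms(1) unfolding Defs.components_def by blast
  obtain w2 where w2: "C2 = {v \<in> A. (w2, v) \<in> ?R\<^sup>*}" using assms(2) unfolding Defs.components_def by blast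
  have "(w1, w2) \<in> ?R\<^sup>*" "(w2, w1) \<in> ?R\<^sup>*"
    using assms(3,4) \<open>sym (?R\<^sup>*)\<close> unfolding w1 w2 sym_def by (blast intro: rtrancl_trans)+
  then show ?thesis unfolding w1 w2 by (blast intro: rtrancl_trans)
qed

lemma components_Lam_disjoint:
  assumes "C1 \<in> components \<phi> A" and "C2 \<in> components \<phi> A" and "C1 \<noteq> C2"
  shows "Lam \<phi> C1 \<inter> Lam \<phi> C2 = {}"
proof (rule ccontr)
  assume "Lam \<phi> C1 \<inter> Lam \<phi> C2 \<noteq> {}"
  then obtain x v where x: "x \<in> Lam \<phi> C1" and v: "v \<in> C2" "\<phi> v x \<noteq> 0"
    unfolding Lam_def by blast
  have "v \<in> C1"
    using components_isolate[OF assms(1)] components_subset[OF assms(2)] v x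
    unfolding isolates_def by blast
  then show False using components_eq[OF assms(1,2) _ v(1)] assms(3) by blast
qed

lemma components_enumeration:
  assumes inj: "inj_on C {..<n}" and comps: "C ` {..<n} = components \<phi> A"
  shows "\<forall>k<n. C k \<subseteq> A \<and> isolates \<phi> A (C k) (Lam \<phi> (C k))"
    and "\<forall>k<n. \<forall>l<n. k \<noteq> l \<longrightarrow> Lam \<phi> (C k) \<inter> Lam \<phi> (C l) = {}"
proof -
  have comp: "C k \<in> components \<phi> A" if "k < n" for k using comps that by blast
  then show "\<forall>k<n. C k \<subseteq> A \<and> isolates \<phi> A (C k) (Lam \<phi> (C k))"
    using components_subset components_isolate by blast
  show "\<forall>k<n. \<forall>l<n. k \<noteq> l \<longrightarrow> Lam \<phi> (C k) \<inter> Lam \<phi> (C l) = {}"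
  proof (intro allI impI)
    fix k l assume "k < n" "l < n" "k \<noteq> l"
    then have "C k \<noteq> C l" using inj_onD[OF inj] by auto
    then show "Lam \<phi> (C k) \<inter> Lam \<phi> (C l) = {}"
      using components_Lam_disjoint comp \<open>k < n\<close> \<open>l < n\<close> by blast
  qed
qed

section \<open>Ground states\<close>

lemma lowered_PsiA_support:
  fixes \<phi> :: "'v::{finite,linorder} \<Rightarrow> 'x::{finite,linorder} \<Rightarrow> real"
  assumes "\<forall>k\<in>set ks. \<forall>l\<in>set ks. k \<noteq> l \<longrightarrow> L k \<inter> L l = {}" and "distinct ks"
    and "foldr (\<lambda>k. Sminus_set (L k) ^^ J k) ks (PsiA \<phi> A) S \<noteq> 0"
  shows "singly_occupied S \<and> card S = card A"
proof -
  have "\<forall>S. PsiA \<phi> A S \<noteq> 0 \<longrightarrow> down_sites S = {}" using PsiA_support(1) by blast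
  then have "singly_occupied S \<and> PsiA \<phi> A (raise_spins UNIV S) \<noteq> 0"
    using assms(3) foldr_Sminus_set_apply[OF assms(1,2)] by (simp split: if_splits)
  then show ?thesis using PsiA_support(2) card_raise_spins by metis
qed

lemma lowered_PsiA_nonzero:
  fixes \<phi> :: "'v::{finite,linorder} \<Rightarrow> 'x::{finite,linorder} \<Rightarrow> real"
  assumes indep: "\<forall>c. (\<forall>x. (\<Sum>u\<in>UNIV. c u * \<phi> u x) = 0) \<longrightarrow> (\<forall>u. c u = 0)"
    and disj: "\<forall>k\<in>set ks. \<forall>l\<in>set ks. k \<noteq> l \<longrightarrow> L k \<inter> L l = {}" and "distinct ks"
    and blocks: "\<forall>k\<in>set ks. C k \<subseteq> A \<and> isolates \<phi> A (C k) (L k) \<and> J k \<le> card (C k)"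
  shows "\<exists>S. foldr (\<lambda>k. Sminus_set (L k) ^^ J k) ks (PsiA \<phi> A) S \<noteq> 0"
proof -
  obtain S0 where S0: "PsiA \<phi> A S0 \<noteq> 0" using PsiA_nonzero[OF indep] by blast
  have "J k \<le> card {x \<in> L k. (x, Up) \<in> S0}" if "k \<in> set ks" for k
    using blocks that PsiA_support(3)[OF S0, of "C k" "L k"] by simp
  moreover have "\<forall>S. PsiA \<phi> A S \<noteq> 0 \<longrightarrow> down_sites S = {}" using PsiA_support(1) by blast
  ultimately show ?thesis
    using foldr_Sminus_set_nonzero[where \<Psi> = "PsiA \<phi> A", OF disj \<open>distinct ks\<close> _ S0] by blast
qed

lemma Nop_eq_if_card:
  fixes \<Phi> :: "'x::{finite,linorder} fock"
  assumes "\<forall>S. \<Phi> S \<noteq> 0 \<longrightarrow> card S = N"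
  shows "Nop \<Phi> = (\<lambda>S. of_nat N * \<Phi> S)"
  using assms by (auto simp: fun_eq_iff Nop_apply)

lemma Hint_eq_0_if_singly_occupied:
  fixes \<Phi> :: "'x::{finite,linorder} fock"
  assumes "\<forall>S. \<Phi> S \<noteq> 0 \<longrightarrow> singly_occupied S"
  shows "Hint U \<Phi> = (\<lambda>S. 0)"
  using assms by (auto simp: fun_eq_iff Hint_apply singly_occupied_def intro!: sum.neutral)

theorem lemma3p1:
  fixes t :: "'x::{finite,linorder} \<Rightarrow> 'x \<Rightarrow> real"
    and U :: "'x \<Rightarrow> real"
    and \<epsilon>0 :: real
    and \<phi> :: "'v::{finite,linorder} \<Rightarrow> 'x \<Rightarrow> real"
    and A :: "'v set" and Ne :: nat and n :: nat
    and C :: "nat \<Rightarrow> 'v set" and m :: "nat \<Rightarrow> real"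
  assumes t_sym: "\<forall>x y. t x y = t y x"
    and U_pos: "\<forall>x. U x > 0"
    and eps0: "is_min_eigval t \<epsilon>0"
    and basis: "is_basis_of \<phi> (eigspace t \<epsilon>0)"
    and Ne_le: "Ne \<le> card (UNIV :: 'v set)"
    and A_card: "card A = Ne"
    and C_inj: "inj_on C {..<n}"
    and C_comp: "C ` {..<n} = components \<phi> A"
    and m_range: "\<forall>k<n. \<exists>j::nat. j \<le> card (C k) \<and> m k = real (card (C k)) / 2 - real j"
  shows "(\<exists>S. PhiAm \<phi> A n C m S \<noteq> 0)
       \<and> Nop (PhiAm \<phi> A n C m) = (\<lambda>S. of_nat Ne * PhiAm \<phi> A n C m S)
       \<and> Ham t U (PhiAm \<phi> A n C m) = (\<lambda>S. complex_of_real (real Ne * \<epsilon>0) * PhiAm \<phi> A n C m S)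
       \<and> (\<forall>(E::real) \<Psi>. (\<exists>S. \<Psi> S \<noteq> 0) \<longrightarrow> Nop \<Psi> = (\<lambda>S. of_nat Ne * \<Psi> S)
            \<longrightarrow> Ham t U \<Psi> = (\<lambda>S. complex_of_real E * \<Psi> S) \<longrightarrow> real Ne * \<epsilon>0 \<le> E)"
proof -
  define J where "J k = nat \<lfloor>real (card (C k)) / 2 - m k\<rfloor>" for k
  define L where "L k = Lam \<phi> (C k)" for k
  let ?\<Phi> = "PhiAm \<phi> A n C m"
  have \<Phi>: "?\<Phi> = foldr (\<lambda>k. Sminus_set (L k) ^^ J k) [0..<n] (PsiA \<phi> A)"
    unfolding PhiAm_def J_def L_def ..
  have indep: "\<forall>c. (\<forall>x. (\<Sum>u\<in>UNIV. c u * \<phi> u x) = 0) \<longrightarrow> (\<forall>u. c u = 0)"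
    and eig: "\<forall>u. \<phi> u \<in> eigspace t \<epsilon>0"
    using basis unfolding is_basis_of_def by blast+
  have J: "J k \<le> card (C k)" if "k < n" for k
    using m_range that unfolding J_def by force
  have blocks: "\<forall>k\<in>set [0..<n]. C k \<subseteq> A \<and> isolates \<phi> A (C k) (L k) \<and> J k \<le> card (C k)"
    and disj: "\<forall>k\<in>set [0..<n]. \<forall>l\<in>set [0..<n]. k \<noteq> l \<longrightarrow> L k \<inter> L l = {}"
    using components_enumeration[OF C_inj C_comp] J unfolding L_def by auto
  have supp: "\<forall>S. ?\<Phi> S \<noteq> 0 \<longrightarrow> singly_occupied S \<and> card S = Ne"
    using lowered_PsiA_support[OF disj distinct_upt] A_card unfolding \<Phi> by blast
  have N: "Nop ?\<Phi> = (\<lambda>S. of_nat Ne * ?\<Phi> S)"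
    using supp by (intro Nop_eq_if_card) blast
  have "ann_in_span \<phi> A ?\<Phi>"
    unfolding \<Phi> using blocks by (intro ann_in_span_foldr_Sminus_set[where C = C] ann_in_span_PsiA) blast
  then have "Ham t U ?\<Phi> = (\<lambda>S. complex_of_real (real Ne * \<epsilon>0) * ?\<Phi> S)"
    using Hint_eq_0_if_singly_occupied[of ?\<Phi> U] supp N
    by (simp add: fun_eq_iff Ham_def Hhop_eq_Nop_if_ann_in_span[OF eig])
  moreover have "\<exists>S. ?\<Phi> S \<noteq> 0"
    unfolding \<Phi> using lowered_PsiA_nonzero[OF indep disj _ blocks] by simp
  moreover have "\<forall>x. 0 \<le> U x" using U_pos by (simp add: less_imp_le)
  ultimately show ?thesis
    using N Ham_eigenvalue_lower_bound[OF t_sym _ eps0] by blast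
qed

end
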